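(* Let $d\geq 3$ and let $G=(V,E)$ be a graph on $n$ vertices that is not $M$-independent in $\mathbb{R}^{d-2}$. Then there is a generic configuration $p=(p^{(1)}_v,\dots,p^{(d)}_v)_{v\in V}\in\mathbb{C}^{nd}$ such that the infinitesimal rotation $\varphi=\varphi(p)$ of $(G,p)$ given by $\varphi_v=(-p^{(d)}_v,0,\dots,0,p^{(1)}_v)$ for all $v\in V$ is not in the subspace $W(G,p)\subseteq\mathbb{C}^{nd}$ spanned by $W_1(G,p)\cup W_2(G,p)$. In particular, $W(G,p)$ is a proper subspace of the space of infinitesimal motions of $(G,p)$.
   Context: For a framework $(G,p)$ with $p:V\to\mathbb{C}^d$, the rigidity matrix $R(G,p)$ is the $|E|\times d|V|$ matrix whose row for edge $uv$ has $p(u)-p(v)$ in the $d$ columns of $u$, $p(v)-p(u)$ in the columns of $v$, and zeros elsewhere. The infinitesimal motions of $(G,p)$ are the elements of $\ker R(G,p)\subseteq\mathbb{C}^{nd}$. $W_1(G,p)$ is the set of infinitesimal motions of the form $(q_v,0)_{v\in V}$ with $q_v\in\mathbb{C}^{d-1}$ (supported on the first $d-1$ coordinates), and $W_2(G,p)$ the set of those of the form $(0,q_v)_{v\in V}$ (supported on the last $d-1$ coordinates). A configuration is generic if its coordinates are algebraically independent over $\mathbb{Q}$. $G$ is $M$-independent in $\mathbb{R}^k$ if the rows of $R(G,p)$ are linearly independent for generic $p:V\to\mathbb{R}^k$. *)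

theory Defs
  imports Complex_Main
begin

definition graph :: "'v set \<Rightarrow> 'v set set \<Rightarrow> bool" where
  "graph V E \<longleftrightarrow> finite V \<and>
     E \<subseteq> {e. \<exists>u w. u \<in> V \<and> w \<in> V \<and> u \<noteq> w \<and> e = {u, w}}"

text \<open>A polynomial is a finitely supported coefficient function on monomials (exponent vectors).\<close>
definition alg_indep_Q :: "('i \<Rightarrow> 'a::field_char_0) \<Rightarrow> 'i set \<Rightarrow> bool" where
  "alg_indep_Q x I \<longleftrightarrow>
     (\<forall>c :: ('i \<Rightarrow> nat) \<Rightarrow> rat.
        finite {m. c m \<noteq> 0} \<longrightarrow>
        (\<forall>m. c m \<noteq> 0 \<longrightarrow> (\<forall>i. i \<notin> I \<longrightarrow> m i = 0)) \<longrightarrow>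
        (\<Sum>m\<in>{m. c m \<noteq> 0}. of_rat (c m) * (\<Prod>i\<in>I. x i ^ m i)) = 0 \<longrightarrow>
        (\<forall>m. c m = 0))"

definition generic :: "'v set \<Rightarrow> nat \<Rightarrow> ('v \<Rightarrow> nat \<Rightarrow> 'a::field_char_0) \<Rightarrow> bool" where
  "generic V d p \<longleftrightarrow> alg_indep_Q (\<lambda>(v, k). p v k) (V \<times> {..<d})"

definition rig_entry :: "('v \<Rightarrow> nat \<Rightarrow> 'a::ab_group_add) \<Rightarrow> 'v set \<Rightarrow> 'v \<Rightarrow> nat \<Rightarrow> 'a" where
  "rig_entry p e v j = (if v \<in> e then p v j - p (THE w. w \<in> e \<and> w \<noteq> v) j else 0)"

definition rows_independent :: "'v set \<Rightarrow> 'v set set \<Rightarrow> nat \<Rightarrow> ('v \<Rightarrow> nat \<Rightarrow> real) \<Rightarrow> bool" where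
  "rows_independent V E k p \<longleftrightarrow>
     (\<forall>lam :: 'v set \<Rightarrow> real.
        (\<forall>v\<in>V. \<forall>j<k. (\<Sum>e\<in>E. lam e * rig_entry p e v j) = 0) \<longrightarrow> (\<forall>e\<in>E. lam e = 0))"

definition M_independent :: "'v set \<Rightarrow> 'v set set \<Rightarrow> nat \<Rightarrow> bool" where
  "M_independent V E k \<longleftrightarrow>
     (\<forall>p :: 'v \<Rightarrow> nat \<Rightarrow> real. generic V k p \<longrightarrow> rows_independent V E k p)"

definition inf_motions :: "'v set \<Rightarrow> 'v set set \<Rightarrow> nat \<Rightarrow> ('v \<Rightarrow> nat \<Rightarrow> complex)
    \<Rightarrow> ('v \<Rightarrow> nat \<Rightarrow> complex) set" where
  "inf_motions V E d p = {q. (\<forall>v k. (v \<notin> V \<or> k \<ge> d) \<longrightarrow> q v k = 0) \<and>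
      (\<forall>e\<in>E. (\<Sum>v\<in>V. \<Sum>j<d. rig_entry p e v j * q v j) = 0)}"

definition W1 where
  "W1 V E d p = {q \<in> inf_motions V E d p. \<forall>v. q v (d - 1) = 0}"

definition W2 where
  "W2 V E d p = {q \<in> inf_motions V E d p. \<forall>v. q v 0 = 0}"

definition cspan :: "('v \<Rightarrow> nat \<Rightarrow> complex) set \<Rightarrow> ('v \<Rightarrow> nat \<Rightarrow> complex) set" where
  "cspan S = {x. \<exists>F c. finite F \<and> F \<subseteq> S \<and>
                   (\<forall>v k. x v k = (\<Sum>y\<in>F. c y * y v k))}"

definition W where
  "W V E d p = cspan (W1 V E d p \<union> W2 V E d p)"

definition rot :: "'v set \<Rightarrow> nat \<Rightarrow> ('v \<Rightarrow> nat \<Rightarrow> complex) \<Rightarrow> 'v \<Rightarrow> nat \<Rightarrow> complex" where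
  "rot V d p v k = (if v \<in> V \<and> k = 0 then - p v (d - 1)
                   else if v \<in> V \<and> k = d - 1 then p v 0 else 0)"

end

theory Submission
  imports Defs "HOL-Analysis.Continuum_Not_Denumerable" "HOL-Computational_Algebra.Polynomial"
begin

(* Let \<lambda> be a nonzero row dependence of R(G,p0) for a generic p0 in R^(d-2), and put p0 into
   the middle coordinates 2..d-1 of p (indices 1..d-2 below, where coordinates count from 0).
   Then \<lambda>^T R(G,p) vanishes on all middle columns. If \<phi> were in W, its W_1-part q would be an
   infinitesimal motion with last coordinates 0 and first coordinates -p^(d), so
   0 = \<lambda>^T R(G,p) q = - \<Sigma>_v p^(d)_v (\<lambda>^T R(G,p))_(v,1). The remaining coordinates of p are
   chosen one at a time, each transcendental over the previous ones (possible since C is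
   uncountable), and the last two are chosen so that this sum is nonzero. *)

section \<open>Rational polynomials and algebraic independence\<close>

definition rat_mpoly :: "(('i \<Rightarrow> nat) \<Rightarrow> rat) \<Rightarrow> 'i set \<Rightarrow> bool" where
  "rat_mpoly c I \<longleftrightarrow> finite {m. c m \<noteq> 0} \<and> (\<forall>m. c m \<noteq> 0 \<longrightarrow> (\<forall>i. i \<notin> I \<longrightarrow> m i = 0))"

definition rat_mpoly_eval :: "(('i \<Rightarrow> nat) \<Rightarrow> rat) \<Rightarrow> 'i set \<Rightarrow> ('i \<Rightarrow> 'a::field_char_0) \<Rightarrow> 'a" where
  "rat_mpoly_eval c I x = (\<Sum>m\<in>{m. c m \<noteq> 0}. of_rat (c m) * (\<Prod>i\<in>I. x i ^ m i))"

lemma alg_indep_Q_iff: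
  "alg_indep_Q x I \<longleftrightarrow> (\<forall>c. rat_mpoly c I \<longrightarrow> rat_mpoly_eval c I x = 0 \<longrightarrow> c = (\<lambda>_. 0))"
  unfolding alg_indep_Q_def rat_mpoly_def rat_mpoly_eval_def fun_eq_iff by blast

lemma alg_indep_Q_of_real:
  assumes "alg_indep_Q x I"
  shows "alg_indep_Q (\<lambda>i. of_real (x i) :: 'a::real_field) I"
  unfolding alg_indep_Q_iff
proof (intro allI impI)
  fix c assume c: "rat_mpoly c I" and "rat_mpoly_eval c I (\<lambda>i. of_real (x i) :: 'a) = 0"
  moreover have "of_real (of_rat r) = (of_rat r :: 'a)" for r
    by (cases r) (simp add: of_rat_rat)
  ultimately have "of_real (rat_mpoly_eval c I x) = (0 :: 'a)"
    unfolding rat_mpoly_eval_def by simp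
  then show "c = (\<lambda>_. 0)" using assms c by (simp add: alg_indep_Q_iff)
qed

lemma alg_indep_Q_reindex:
  fixes x :: "'i \<Rightarrow> 'a::field_char_0" and y :: "'j \<Rightarrow> 'a"
  assumes indep: "alg_indep_Q y J" and h: "bij_betw h I J" and xy: "\<And>i. i \<in> I \<Longrightarrow> x i = y (h i)"
  shows "alg_indep_Q x I"
  unfolding alg_indep_Q_iff
proof (intro allI impI)
  fix c assume c: "rat_mpoly c I" and eval: "rat_mpoly_eval c I x = 0"
  define g where "g = the_inv_into I h"
  have gh: "g (h i) = i" if "i \<in> I" for i
    using h that by (simp add: g_def bij_betw_def the_inv_into_f_f)
  have hg: "h (g j) = j" "g j \<in> I" if "j \<in> J" for j
    using h that bij_betw_apply[OF bij_betw_the_inv_into[OF h]]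
    by (auto simp: g_def f_the_inv_into_f_bij_betw)
  have hI: "h i \<in> J" if "i \<in> I" for i using h that by (simp add: bij_betw_apply)
  define to_J where "to_J m = (\<lambda>j. if j \<in> J then m (g j) else 0)" for m :: "'i \<Rightarrow> nat"
  define to_I where "to_I m = (\<lambda>i. if i \<in> I then m (h i) else 0)" for m :: "'j \<Rightarrow> nat"
  define c' where "c' m = (if \<forall>j. j \<notin> J \<longrightarrow> m j = 0 then c (to_I m) else 0)" for m
  have to_I_to_J: "to_I (to_J m) = m" if "c m \<noteq> 0" for m
    using c that unfolding rat_mpoly_def by (auto simp: to_I_def to_J_def fun_eq_iff gh hI)
  have to_J_to_I: "to_J (to_I m) = m" if "c' m \<noteq> 0" for m
    using that hg by (auto simp: to_I_def to_J_def c'_def fun_eq_iff split: if_splits)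
  have c'_to_J: "c' (to_J m) = c m" if "c m \<noteq> 0" for m
    using to_I_to_J[OF that] by (simp add: c'_def to_J_def)
  have prod_to_J: "(\<Prod>j\<in>J. y j ^ to_J m j) = (\<Prod>i\<in>I. x i ^ m i)" for m
    using prod.reindex_bij_betw[OF h, of "\<lambda>j. y j ^ to_J m j"]
    by (simp add: to_J_def gh hI xy)
  have prod_to_I: "(\<Prod>i\<in>I. x i ^ to_I m i) = (\<Prod>j\<in>J. y j ^ m j)" if "c' m \<noteq> 0" for m
    using prod_to_J[of "to_I m"] to_J_to_I[OF that] by simp
  have c'_to_I: "c (to_I m) = c' m" if "c' m \<noteq> 0" for m
    using that unfolding c'_def by (metis (full_types))
  have "{m. c' m \<noteq> 0} \<subseteq> to_J ` {m. c m \<noteq> 0}"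
    using to_J_to_I c'_to_I by (metis (mono_tags, lifting) image_eqI mem_Collect_eq subsetI)
  then have "finite {m. c' m \<noteq> 0}"
    by (rule finite_subset) (use c in \<open>simp add: rat_mpoly_def\<close>)
  then have "rat_mpoly c' J"
    unfolding rat_mpoly_def by (simp add: c'_def)
  moreover have "rat_mpoly_eval c' J y = rat_mpoly_eval c I x"
    unfolding rat_mpoly_eval_def
    by (rule sum.reindex_bij_witness[where i = to_J and j = to_I])
       (use to_I_to_J to_J_to_I c'_to_J c'_to_I in \<open>auto simp: prod_to_I\<close>)
  ultimately have "c' = (\<lambda>_. 0)" using indep eval by (simp add: alg_indep_Q_iff)
  then show "c = (\<lambda>_. 0)" using c'_to_J by (auto simp: fun_eq_iff)
qed

definition rat_mpoly_values :: "('i \<Rightarrow> 'a::field_char_0) \<Rightarrow> 'i set \<Rightarrow> 'a set" where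
  "rat_mpoly_values x I = {rat_mpoly_eval c I x | c. rat_mpoly c I}"

lemma countable_rat_mpoly_values:
  assumes "finite I"
  shows "countable (rat_mpoly_values x I)"
proof -
  obtain ixs where ixs: "set ixs = I" "distinct ixs"
    using assms finite_distinct_list by blast
  define ev where "ev ps = (\<Sum>(ms, r)\<leftarrow>ps. of_rat r * (\<Prod>(i, e)\<leftarrow>zip ixs ms. x i ^ e))"
    for ps :: "(nat list \<times> rat) list"
  have "rat_mpoly_values x I \<subseteq> range ev"
  proof
    fix s assume "s \<in> rat_mpoly_values x I"
    then obtain c where "finite {m. c m \<noteq> 0}" and s: "s = rat_mpoly_eval c I x"
      unfolding rat_mpoly_values_def rat_mpoly_def by blast
    then obtain ms where ms: "set ms = {m. c m \<noteq> 0}" "distinct ms"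
      using finite_distinct_list by blast
    have "s = (\<Sum>m\<leftarrow>ms. of_rat (c m) * (\<Prod>i\<in>I. x i ^ m i))"
      unfolding s rat_mpoly_eval_def ms(1)[symmetric] using ms(2) by (simp add: sum_list_distinct_conv_sum_set)
    also have "\<dots> = ev (map (\<lambda>m. (map m ixs, c m)) ms)"
      unfolding ev_def ixs(1)[symmetric]
      by (simp add: o_def zip_map2 zip_same_conv_map prod.distinct_set_conv_list[OF ixs(2)])
    finally show "s \<in> range ev" by blast
  qed
  then show ?thesis by (rule countable_subset) simp
qed

definition rat_mpoly_coeff :: "(('i \<Rightarrow> nat) \<Rightarrow> rat) \<Rightarrow> 'i \<Rightarrow> nat \<Rightarrow> ('i \<Rightarrow> nat) \<Rightarrow> rat" where
  "rat_mpoly_coeff c j k m = (if m j = 0 then c (m(j := k)) else 0)"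

lemma rat_mpoly_rat_mpoly_coeff:
  assumes "rat_mpoly c (insert j I)"
  shows "rat_mpoly (rat_mpoly_coeff c j k) I"
proof -
  have "{m. rat_mpoly_coeff c j k m \<noteq> 0} \<subseteq> (\<lambda>m. m(j := 0)) ` {m. c m \<noteq> 0}"
  proof
    fix m assume "m \<in> {m. rat_mpoly_coeff c j k m \<noteq> 0}"
    then have "m j = 0" "c (m(j := k)) \<noteq> 0" by (auto simp: rat_mpoly_coeff_def split: if_splits)
    then show "m \<in> (\<lambda>m. m(j := 0)) ` {m. c m \<noteq> 0}"
      by (intro image_eqI[of _ _ "m(j := k)"]) auto
  qed
  with assms show ?thesis
    unfolding rat_mpoly_def rat_mpoly_coeff_def
    by (auto intro: finite_subset split: if_splits)
qed

lemma rat_mpoly_coeff_eq_0: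
  assumes "\<And>k. rat_mpoly_coeff c j k = (\<lambda>_. 0)"
  shows "c = (\<lambda>_. 0)"
proof
  fix m
  have "c m = rat_mpoly_coeff c j (m j) (m(j := 0))"
    by (simp add: rat_mpoly_coeff_def)
  then show "c m = 0" by (simp add: assms)
qed

lemma rat_mpoly_eval_insert:
  assumes I: "finite I" "j \<notin> I" and c: "finite {m. c m \<noteq> 0}" and K: "\<And>m. c m \<noteq> 0 \<Longrightarrow> m j \<le> K"
  shows "rat_mpoly_eval c (insert j I) (x(j := t)) =
           (\<Sum>k\<le>K. rat_mpoly_eval (rat_mpoly_coeff c j k) I x * t ^ k)"
proof -
  define S where "S = {m. c m \<noteq> 0}"
  define P where "P m = (\<Prod>i\<in>I. x i ^ m i)" for m
  have P_upd: "P (m(j := k)) = P m" for m k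
    unfolding P_def using I by (intro prod.cong) auto
  have P_fun_upd: "(\<Prod>i\<in>I. (x(j := t)) i ^ m i) = P m" for m
    unfolding P_def using I by (intro prod.cong) auto
  have coeff_eval: "rat_mpoly_eval (rat_mpoly_coeff c j k) I x = (\<Sum>m\<in>{m\<in>S. m j = k}. of_rat (c m) * P m)"
    for k
    unfolding rat_mpoly_eval_def P_def[symmetric]
    by (rule sum.reindex_bij_witness[where i = "\<lambda>m. m(j := 0)" and j = "\<lambda>m. m(j := k)"])
       (auto simp: S_def rat_mpoly_coeff_def P_upd split: if_splits)
  have "rat_mpoly_eval c (insert j I) (x(j := t)) = (\<Sum>m\<in>S. of_rat (c m) * P m * t ^ m j)"
    unfolding rat_mpoly_eval_def S_def[symmetric] P_def
    using I P_fun_upd by (simp add: P_def algebra_simps)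
  also have "\<dots> = (\<Sum>k\<le>K. \<Sum>m\<in>{m\<in>S. m j = k}. of_rat (c m) * P m * t ^ m j)"
    by (rule sum.group[symmetric]) (use c K in \<open>auto simp: S_def\<close>)
  also have "\<dots> = (\<Sum>k\<le>K. rat_mpoly_eval (rat_mpoly_coeff c j k) I x * t ^ k)"
    by (simp add: coeff_eval sum_distrib_right)
  finally show ?thesis .
qed

lemma countable_roots_of_polys_with_coeffs_in:
  assumes "countable A"
  shows "countable {t :: 'a::{comm_ring_1,ring_no_zero_divisors}.
                      \<exists>p. p \<noteq> 0 \<and> (\<forall>k. coeff p k \<in> A) \<and> poly p t = 0}"
proof -
  have "{p. p \<noteq> 0 \<and> (\<forall>k. coeff p k \<in> A)} \<subseteq> Poly ` lists A"
  proof
    fix p assume "p \<in> {p. p \<noteq> 0 \<and> (\<forall>k. coeff p k \<in> A)}"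
    then have "coeffs p \<in> lists A" by (auto simp: coeffs_def)
    then show "p \<in> Poly ` lists A" by (rule image_eqI[where f = Poly, OF Poly_coeffs[symmetric]])
  qed
  then have "countable {p. p \<noteq> 0 \<and> (\<forall>k. coeff p k \<in> A)}"
    by (rule countable_subset) (use assms in simp)
  then have "countable (\<Union>p\<in>{p. p \<noteq> 0 \<and> (\<forall>k. coeff p k \<in> A)}. {t. poly p t = 0})"
    by (rule countable_UN) (simp add: countable_finite poly_roots_finite)
  then show ?thesis by (rule countable_subset[rotated]) blast
qed

lemma alg_indep_Q_fun_upd:
  fixes x :: "'i \<Rightarrow> 'a::field_char_0"
  assumes I: "finite I" "j \<notin> I" and indep: "alg_indep_Q x I"
    and not_root: "\<And>p. p \<noteq> 0 \<Longrightarrow> \<forall>k. coeff p k \<in> rat_mpoly_values x I \<Longrightarrow> poly p t \<noteq> 0"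
  shows "alg_indep_Q (x(j := t)) (insert j I)"
  unfolding alg_indep_Q_iff
proof (intro allI impI)
  fix c assume c: "rat_mpoly c (insert j I)" and eval: "rat_mpoly_eval c (insert j I) (x(j := t)) = 0"
  have c_finite: "finite {m. c m \<noteq> 0}" using c by (simp add: rat_mpoly_def)
  define K where "K = Max (insert 0 ((\<lambda>m. m j) ` {m. c m \<noteq> 0}))"
  have K: "m j \<le> K" if "c m \<noteq> 0" for m
    using c_finite that unfolding K_def by (intro Max_ge) auto
  define a where "a k = rat_mpoly_eval (rat_mpoly_coeff c j k) I x" for k
  define p where "p = (\<Sum>k\<le>K. monom (a k) k)"
  have coeff_p: "coeff p k = (if k \<le> K then a k else 0)" for k
    by (simp add: p_def coeff_sum)
  have "0 \<in> rat_mpoly_values x I"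
    unfolding rat_mpoly_values_def rat_mpoly_def rat_mpoly_eval_def
    by (intro CollectI exI[of _ "\<lambda>_. 0"]) simp
  moreover have "a k \<in> rat_mpoly_values x I" for k
    unfolding a_def rat_mpoly_values_def using rat_mpoly_rat_mpoly_coeff[OF c] by blast
  ultimately have "\<forall>k. coeff p k \<in> rat_mpoly_values x I" by (simp add: coeff_p)
  moreover have "poly p t = 0"
  proof -
    have "rat_mpoly_eval c (insert j I) (x(j := t)) = (\<Sum>k\<le>K. a k * t ^ k)"
      unfolding a_def by (rule rat_mpoly_eval_insert[OF I c_finite]) (rule K)
    then show ?thesis using eval by (simp add: p_def poly_sum poly_monom)
  qed
  ultimately have "p = 0" using not_root by blast
  have "rat_mpoly_coeff c j k = (\<lambda>_. 0)" for k
  proof (cases "k \<le> K")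
    case True
    then have "a k = 0" using coeff_p[of k] \<open>p = 0\<close> by simp
    then show ?thesis
      using indep rat_mpoly_rat_mpoly_coeff[OF c] by (simp add: alg_indep_Q_iff a_def)
  next
    case False
    then show ?thesis using K by (force simp: rat_mpoly_coeff_def)
  qed
  then show "c = (\<lambda>_. 0)" by (rule rat_mpoly_coeff_eq_0)
qed

lemma alg_indep_Q_insert:
  fixes x :: "'i \<Rightarrow> 'a::field_char_0"
  assumes uncountable: "uncountable (UNIV :: 'a set)" and I: "finite I" "j \<notin> I"
    and indep: "alg_indep_Q x I" and Z: "countable Z"
  obtains t where "t \<notin> Z" "alg_indep_Q (x(j := t)) (insert j I)"
proof -
  define Roots where
    "Roots = {t. \<exists>p. p \<noteq> 0 \<and> (\<forall>k. coeff p k \<in> rat_mpoly_values x I) \<and> poly p t = 0}"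
  have "countable Roots"
    unfolding Roots_def
    by (rule countable_roots_of_polys_with_coeffs_in[OF countable_rat_mpoly_values[OF I(1)]])
  then have "\<not> UNIV \<subseteq> Roots \<union> Z"
    using Z uncountable countable_subset[of UNIV "Roots \<union> Z"] by auto
  then obtain t where t: "t \<notin> Roots" "t \<notin> Z" by blast
  have "alg_indep_Q (x(j := t)) (insert j I)"
  proof (rule alg_indep_Q_fun_upd[OF I indep])
    fix p assume "p \<noteq> 0" "\<forall>k. coeff p k \<in> rat_mpoly_values x I"
    then show "poly p t \<noteq> 0" using t(1) unfolding Roots_def by blast
  qed
  with t(2) show thesis by (rule that)
qed

lemma alg_indep_Q_extend:
  fixes x :: "'i \<Rightarrow> 'a::field_char_0"
  assumes "uncountable (UNIV :: 'a set)" "finite J" "finite I" "I \<inter> J = {}" "alg_indep_Q x I"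
  shows "\<exists>x'. (\<forall>i. i \<notin> J \<longrightarrow> x' i = x i) \<and> alg_indep_Q x' (I \<union> J)"
  using assms(2-)
proof (induction J rule: finite_induct)
  case empty
  then show ?case by auto
next
  case (insert j J)
  then obtain x' where x': "\<forall>i. i \<notin> J \<longrightarrow> x' i = x i" "alg_indep_Q x' (I \<union> J)"
    by auto
  have "finite (I \<union> J)" "j \<notin> I \<union> J" using insert by auto
  then obtain t where "alg_indep_Q (x'(j := t)) (insert j (I \<union> J))"
    using alg_indep_Q_insert[OF assms(1) _ _ x'(2) countable_empty] by blast
  moreover have "\<forall>i. i \<notin> insert j J \<longrightarrow> (x'(j := t)) i = x i" using x' by auto
  ultimately show ?case by (metis Un_insert_right)
qed

lemma alg_indep_Q_insert_nonzero:
  fixes x :: "'i \<Rightarrow> 'a::field_char_0"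
  assumes "uncountable (UNIV :: 'a set)" "finite I" "j \<notin> I" "alg_indep_Q x I"
    and affine: "\<And>t. f (x(j := t)) = \<alpha> + \<beta> * t" and "\<beta> \<noteq> 0"
  obtains t where "alg_indep_Q (x(j := t)) (insert j I)" "f (x(j := t)) \<noteq> 0"
proof -
  obtain t where t: "t \<notin> {- \<alpha> / \<beta>}" "alg_indep_Q (x(j := t)) (insert j I)"
    using alg_indep_Q_insert[OF assms(1-4) countable_insert[OF countable_empty]] by blast
  have "f (x(j := t)) \<noteq> 0"
  proof
    assume "f (x(j := t)) = 0"
    then have "t = - \<alpha> / \<beta>"
      using affine[of t] \<open>\<beta> \<noteq> 0\<close> by (simp add: field_simps add_eq_0_iff)
    with t(1) show False by simp
  qed
  with t(2) show thesis by (rule that)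
qed

section \<open>Row combinations of the rigidity matrix\<close>

definition row_comb :: "'v set set \<Rightarrow> ('v set \<Rightarrow> 'a::comm_ring) \<Rightarrow> ('v \<Rightarrow> nat \<Rightarrow> 'a) \<Rightarrow> 'v \<Rightarrow> nat \<Rightarrow> 'a" where
  "row_comb E lam p v j = (\<Sum>e\<in>E. lam e * rig_entry p e v j)"

lemma rig_entry_doubleton: "u \<noteq> w \<Longrightarrow> rig_entry p {u, w} u j = p u j - p w j"
proof -
  assume "u \<noteq> w"
  then have "(THE z. z \<in> {u, w} \<and> z \<noteq> u) = w" by (intro the_equality) auto
  then show ?thesis by (simp add: rig_entry_def)
qed

lemma rig_entry_cong: "(\<And>w. p' w j = p w j) \<Longrightarrow> rig_entry p' e v j = rig_entry p e v j"
  by (simp add: rig_entry_def)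

lemma row_comb_cong:
  assumes "\<And>w. p' w j = p w j"
  shows "row_comb E lam p' v j = row_comb E lam p v j"
  using rig_entry_cong[of p' j p, OF assms] by (simp add: row_comb_def)

lemma row_comb_of_real:
  assumes "\<And>w. p w j = of_real (p0 w j')"
  shows "row_comb E (\<lambda>e. of_real (lam e)) p v j = of_real (row_comb E lam p0 v j')"
proof -
  have "rig_entry p e v j = of_real (rig_entry p0 e v j')" for e
    using assms by (simp add: rig_entry_def)
  then show ?thesis by (simp add: row_comb_def)
qed

lemma graph_finite_edges: "graph V E \<Longrightarrow> finite E"
  unfolding graph_def by (rule finite_subset[of _ "Pow V"]) auto

lemma graph_edge_at:
  assumes "graph V E" "e \<in> E" "u \<in> e"
  obtains w where "e = {u, w}" "w \<noteq> u" "u \<in> V" "w \<in> V"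
proof -
  obtain u' w' where e: "e = {u', w'}" "u' \<in> V" "w' \<in> V" "u' \<noteq> w'"
    using assms(1,2) unfolding graph_def by blast
  then consider "u = u'" | "u = w'" using assms(3) by blast
  then show thesis
  proof cases
    case 1
    then show thesis using e that[of w'] by blast
  next
    case 2
    then show thesis using e that[of u'] insert_commute[of u' w' "{}"] by auto
  qed
qed

lemma row_comb_move_neighbour:
  assumes G: "graph V E" and ab: "{a, b} \<in> E" "a \<noteq> b" and p': "\<And>v. v \<noteq> b \<Longrightarrow> p' v j = p v j"
  shows "row_comb E lam p' a j = row_comb E lam p a j - lam {a, b} * (p' b j - p b j)"
proof -
  have edge_term: "lam e * rig_entry p' e a j =
      lam e * rig_entry p e a j - (if e = {a, b} then lam {a, b} * (p' b j - p b j) else 0)"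
    if e: "e \<in> E" for e
  proof (cases "a \<in> e")
    case False
    then show ?thesis by (auto simp: rig_entry_def)
  next
    case True
    then obtain w where w: "e = {a, w}" "w \<noteq> a" using graph_edge_at[OF G e] by blast
    then show ?thesis
      using ab p'[of a] p'[of w] by (cases "w = b") (auto simp: rig_entry_doubleton doubleton_eq_iff algebra_simps)
  qed
  have "row_comb E lam p' a j = (\<Sum>e\<in>E. lam e * rig_entry p e a j -
      (if e = {a, b} then lam {a, b} * (p' b j - p b j) else 0))"
    unfolding row_comb_def by (rule sum.cong) (simp_all add: edge_term)
  also have "\<dots> = row_comb E lam p a j - lam {a, b} * (p' b j - p b j)"
    using graph_finite_edges[OF G] ab by (simp add: row_comb_def sum_subtractf)
  finally show ?thesis .
qed

lemma row_comb_pairing_move: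
  assumes V: "finite V" "a \<in> V" and "n \<noteq> j"
    and p': "\<And>v k. k \<noteq> n \<Longrightarrow> p' v k = p v k" "\<And>v. v \<noteq> a \<Longrightarrow> p' v n = p v n"
  shows "(\<Sum>v\<in>V. p' v n * row_comb E lam p' v j) =
           (\<Sum>v\<in>V. p v n * row_comb E lam p v j) + (p' a n - p a n) * row_comb E lam p a j"
proof -
  have L: "row_comb E lam p' v j = row_comb E lam p v j" for v
    using \<open>n \<noteq> j\<close> p'(1) by (intro row_comb_cong) auto
  have "(\<Sum>v\<in>V. p' v n * row_comb E lam p' v j) = (\<Sum>v\<in>V. p v n * row_comb E lam p v j +
      (if v = a then (p' a n - p a n) * row_comb E lam p a j else 0))"
    by (rule sum.cong) (use p'(2) in \<open>auto simp: L algebra_simps\<close>)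
  also have "\<dots> = (\<Sum>v\<in>V. p v n * row_comb E lam p v j) + (p' a n - p a n) * row_comb E lam p a j"
    using V by (simp add: sum.distrib)
  finally show ?thesis .
qed

lemma cspan_subset_inf_motions:
  assumes "S \<subseteq> inf_motions V E d p"
  shows "cspan S \<subseteq> inf_motions V E d p"
proof
  fix x assume "x \<in> cspan S"
  then obtain F c where F: "finite F" "F \<subseteq> S" and x: "\<And>v k. x v k = (\<Sum>y\<in>F. c y * y v k)"
    unfolding cspan_def by blast
  have "(\<Sum>v\<in>V. \<Sum>j<d. rig_entry p e v j * x v j) = 0" if "e \<in> E" for e
  proof -
    have "(\<Sum>v\<in>V. \<Sum>j<d. rig_entry p e v j * x v j) =
        (\<Sum>y\<in>F. c y * (\<Sum>v\<in>V. \<Sum>j<d. rig_entry p e v j * y v j))"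
      by (simp add: x sum_distrib_left sum.swap[of _ F] algebra_simps)
    also have "\<dots> = 0" using F assms that by (simp add: subset_iff inf_motions_def)
    finally show ?thesis .
  qed
  moreover have "x v k = 0" if "v \<notin> V \<or> d \<le> k" for v k
    using F assms that by (auto simp: x subset_iff inf_motions_def intro!: sum.neutral)
  ultimately show "x \<in> inf_motions V E d p" by (simp add: inf_motions_def)
qed

lemma W_subset_inf_motions: "W V E d p \<subseteq> inf_motions V E d p"
  unfolding W_def W1_def W2_def by (rule cspan_subset_inf_motions) auto

lemma rot_in_inf_motions:
  assumes G: "graph V E" and d: "2 \<le> d"
  shows "rot V d p \<in> inf_motions V E d p"
proof -
  define g where "g e v = rig_entry p e v 0 * - p v (d - 1) + rig_entry p e v (d - 1) * p v 0" for e v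
  have "(\<Sum>v\<in>V. \<Sum>j<d. rig_entry p e v j * rot V d p v j) = 0" if e: "e \<in> E" for e
  proof -
    obtain u w where uw: "e = {u, w}" "w \<noteq> u" "u \<in> V" "w \<in> V"
      using G e unfolding graph_def by blast
    have "(\<Sum>j<d. rig_entry p e v j * rot V d p v j) = g e v" if "v \<in> V" for v
    proof -
      have "(\<Sum>j<d. rig_entry p e v j * rot V d p v j) = (\<Sum>j\<in>{0, d - 1}. rig_entry p e v j * rot V d p v j)"
        by (rule sum.mono_neutral_right) (use d in \<open>auto simp: rot_def\<close>)
      then show ?thesis using d that by (simp add: g_def rot_def)
    qed
    then have "(\<Sum>v\<in>V. \<Sum>j<d. rig_entry p e v j * rot V d p v j) = (\<Sum>v\<in>V. g e v)"
      by simp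
    also have "\<dots> = (\<Sum>v\<in>{u, w}. g e v)"
      using G uw by (intro sum.mono_neutral_right) (simp_all add: graph_def g_def rig_entry_def)
    also have "\<dots> = g e u + g e w"
      using uw(2) by simp
    also have "\<dots> = 0"
    proof -
      have r: "rig_entry p e u j = p u j - p w j" "rig_entry p e w j = p w j - p u j" for j
        using uw rig_entry_doubleton[of u w] rig_entry_doubleton[of w u] by (auto simp: insert_commute)
      show ?thesis by (simp only: g_def r) (simp add: algebra_simps)
    qed
    finally show ?thesis .
  qed
  moreover have "rot V d p v k = 0" if "v \<notin> V \<or> d \<le> k" for v k
    using d that by (auto simp: rot_def)
  ultimately show ?thesis by (simp add: inf_motions_def)
qed

lemma inf_motion_orthogonal_row_comb:
  assumes "q \<in> inf_motions V E d p"
  shows "(\<Sum>v\<in>V. \<Sum>j<d. q v j * row_comb E lam p v j) = 0"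
proof -
  have "(\<Sum>e\<in>E. lam e * (\<Sum>v\<in>V. \<Sum>j<d. rig_entry p e v j * q v j)) =
      (\<Sum>v\<in>V. \<Sum>j<d. q v j * row_comb E lam p v j)"
    by (simp add: row_comb_def sum_distrib_left sum.swap[of _ E] algebra_simps)
  moreover have "(\<Sum>e\<in>E. lam e * (\<Sum>v\<in>V. \<Sum>j<d. rig_entry p e v j * q v j)) = 0"
    using assms by (simp add: inf_motions_def)
  ultimately show ?thesis by simp
qed

lemma rot_notin_W:
  assumes d: "2 \<le> d"
    and middle: "\<And>v j. v \<in> V \<Longrightarrow> 0 < j \<Longrightarrow> j < d - 1 \<Longrightarrow> row_comb E lam p v j = 0"
    and pairing: "(\<Sum>v\<in>V. p v (d - 1) * row_comb E lam p v 0) \<noteq> 0"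
  shows "rot V d p \<notin> W V E d p"
proof
  assume "rot V d p \<in> W V E d p"
  then obtain F c where F: "finite F" "F \<subseteq> W1 V E d p \<union> W2 V E d p"
    and rot: "\<And>v k. rot V d p v k = (\<Sum>y\<in>F. c y * y v k)"
    unfolding W_def cspan_def by blast
  define F1 where "F1 = F \<inter> W1 V E d p"
  define q where "q v k = (\<Sum>y\<in>F1. c y * y v k)" for v k
  have "q \<in> cspan (W1 V E d p)"
    unfolding cspan_def q_def F1_def using F(1) by blast
  then have q: "q \<in> inf_motions V E d p"
    using cspan_subset_inf_motions[of "W1 V E d p" V E d p] by (auto simp: W1_def)
  have q_last: "q v (d - 1) = 0" for v
    unfolding q_def F1_def by (auto simp: W1_def intro!: sum.neutral)
  have q_first: "q v 0 = - p v (d - 1)" if "v \<in> V" for v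
  proof -
    have "rot V d p v 0 = (\<Sum>y\<in>F - F1. c y * y v 0) + q v 0"
      unfolding rot q_def by (rule sum.subset_diff) (use F(1) in \<open>auto simp: F1_def\<close>)
    moreover have "(\<Sum>y\<in>F - F1. c y * y v 0) = 0"
      using F(2) by (intro sum.neutral) (auto simp: F1_def W2_def)
    ultimately show ?thesis using that by (simp add: rot_def)
  qed
  have "(\<Sum>j<d. q v j * row_comb E lam p v j) = (\<Sum>j\<in>{0}. q v j * row_comb E lam p v j)"
    if "v \<in> V" for v
  proof (rule sum.mono_neutral_right)
    show "\<forall>j\<in>{..<d} - {0}. q v j * row_comb E lam p v j = 0"
    proof
      fix j assume "j \<in> {..<d} - {0}"
      then have "j = d - 1 \<or> 0 < j \<and> j < d - 1" by auto
      then show "q v j * row_comb E lam p v j = 0" using q_last middle[OF that] by auto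
    qed
  qed (use d in auto)
  then have "0 = (\<Sum>v\<in>V. q v 0 * row_comb E lam p v 0)"
    using inf_motion_orthogonal_row_comb[OF q, of lam] by simp
  also have "\<dots> = - (\<Sum>v\<in>V. p v (d - 1) * row_comb E lam p v 0)"
    by (simp add: q_first sum_negf)
  finally show False using pairing by simp
qed

section \<open>Choice of the configuration\<close>

lemma generic_lift_middle:
  fixes p0 :: "'v \<Rightarrow> nat \<Rightarrow> real"
  assumes V: "finite V" and gen: "generic V (d - 2) p0" and J: "finite J" "J \<subseteq> V \<times> {0, d - 1}"
  obtains x :: "'v \<times> nat \<Rightarrow> complex"
  where "alg_indep_Q x (V \<times> {0<..<d - 1} \<union> J)"
    and "\<And>v j. 0 < j \<Longrightarrow> j < d - 1 \<Longrightarrow> x (v, j) = of_real (p0 v (j - 1))"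
proof -
  define x0 :: "'v \<times> nat \<Rightarrow> complex" where "x0 = (\<lambda>(v, j). of_real (p0 v (j - 1)))"
  have "bij_betw (\<lambda>(v, j). (v, j - 1)) (V \<times> {0<..<d - 1}) (V \<times> {..<d - 2})"
    by (rule bij_betw_byWitness[where f' = "\<lambda>(v, j). (v, j + 1)"]) auto
  with alg_indep_Q_of_real[OF gen[unfolded generic_def]]
  have indep: "alg_indep_Q x0 (V \<times> {0<..<d - 1})"
    by (rule alg_indep_Q_reindex) (auto simp: x0_def)
  have "V \<times> {0<..<d - 1} \<inter> J = {}" using J(2) by auto
  then obtain x where x: "\<forall>i. i \<notin> J \<longrightarrow> x i = x0 i" "alg_indep_Q x (V \<times> {0<..<d - 1} \<union> J)"
    using alg_indep_Q_extend[OF uncountable_UNIV_complex J(1) _ _ indep] V by auto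
  moreover have "(v, j) \<notin> J" if "0 < j" "j < d - 1" for v j
    using J(2) that by auto
  ultimately show thesis using that by (auto simp: x0_def)
qed

lemma alg_indep_Q_insert_row_comb_nonzero:
  fixes x :: "'v \<times> nat \<Rightarrow> complex"
  assumes G: "graph V E" and ab: "{a, b} \<in> E" "a \<noteq> b" and lam: "lam {a, b} \<noteq> 0"
    and I: "finite I" "(b, j) \<notin> I" and indep: "alg_indep_Q x I"
  obtains t where "alg_indep_Q (x((b, j) := t)) (insert (b, j) I)"
    and "row_comb E lam (curry (x((b, j) := t))) a j \<noteq> 0"
proof -
  have "row_comb E lam (curry (x((b, j) := t))) a j =
      row_comb E lam (curry (x((b, j) := 0))) a j + - lam {a, b} * t" for t
    using row_comb_move_neighbour[OF G ab, of "curry (x((b, j) := 0))" j "curry (x((b, j) := t))"]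
    by simp
  from alg_indep_Q_insert_nonzero[OF uncountable_UNIV_complex I indep,
      where f = "\<lambda>x. row_comb E lam (curry x) a j", OF this] lam that
  show thesis by auto
qed

lemma alg_indep_Q_insert_pairing_nonzero:
  fixes x :: "'v \<times> nat \<Rightarrow> complex"
  assumes V: "finite V" "a \<in> V" and "n \<noteq> j"
    and I: "finite I" "(a, n) \<notin> I" and indep: "alg_indep_Q x I"
    and load: "row_comb E lam (curry x) a j \<noteq> 0"
  obtains t where "alg_indep_Q (x((a, n) := t)) (insert (a, n) I)"
    and "(\<Sum>v\<in>V. (x((a, n) := t)) (v, n) * row_comb E lam (curry (x((a, n) := t))) v j) \<noteq> 0"
proof -
  define pairing where "pairing x = (\<Sum>v\<in>V. x (v, n) * row_comb E lam (curry x) v j)" for x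
  have "row_comb E lam (curry (x((a, n) := 0))) a j = row_comb E lam (curry x) a j"
    using \<open>n \<noteq> j\<close> by (intro row_comb_cong) auto
  then have "pairing (x((a, n) := t)) = pairing (x((a, n) := 0)) + row_comb E lam (curry x) a j * t"
    for t
    using row_comb_pairing_move[OF V \<open>n \<noteq> j\<close>, of "curry (x((a, n) := t))" "curry (x((a, n) := 0))" E lam]
    by (simp add: pairing_def algebra_simps)
  from alg_indep_Q_insert_nonzero[OF uncountable_UNIV_complex I indep, where f = pairing, OF this]
    load that
  show thesis unfolding pairing_def by blast
qed

text \<open>The sum in the conclusion is a polynomial with real, not rational, coefficients, so
  genericity alone does not keep it away from zero. Instead the coordinates \<open>p b 0\<close> and
  \<open>p a (d - 1)\<close> are chosen last, each one avoiding the root of a nonconstant affine function.\<close>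
lemma exists_generic_lift_pairing_nonzero:
  fixes p0 :: "'v \<Rightarrow> nat \<Rightarrow> real" and lam :: "'v set \<Rightarrow> complex"
  assumes G: "graph V E" and d: "2 \<le> d" and gen: "generic V (d - 2) p0"
    and ab: "{a, b} \<in> E" "a \<noteq> b" and lam: "lam {a, b} \<noteq> 0"
  shows "\<exists>p. generic V d p \<and> (\<forall>v j. 0 < j \<longrightarrow> j < d - 1 \<longrightarrow> p v j = of_real (p0 v (j - 1))) \<and>
             (\<Sum>v\<in>V. p v (d - 1) * row_comb E lam p v 0) \<noteq> 0"
proof -
  have V: "finite V" "a \<in> V" "b \<in> V"
    using G graph_edge_at[OF G ab(1), of a] graph_edge_at[OF G ab(1), of b] by (auto simp: graph_def)
  define J where "J = V \<times> {0, d - 1} - {(b, 0), (a, d - 1)}"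
  define I where "I = V \<times> {0<..<d - 1} \<union> J"
  have J: "finite J" "J \<subseteq> V \<times> {0, d - 1}"
    unfolding J_def using V(1) by auto
  obtain x1 :: "'v \<times> nat \<Rightarrow> complex" where x1: "alg_indep_Q x1 I"
    and mid: "\<And>v j. 0 < j \<Longrightarrow> j < d - 1 \<Longrightarrow> x1 (v, j) = of_real (p0 v (j - 1))"
    using generic_lift_middle[OF V(1) gen J] unfolding I_def by blast
  have I: "finite I" "(b, 0) \<notin> I" "(a, d - 1) \<notin> insert (b, 0) I"
    using V(1) d by (auto simp: I_def J_def)
  obtain t1 where x2: "alg_indep_Q (x1((b, 0) := t1)) (insert (b, 0) I)"
    and load: "row_comb E lam (curry (x1((b, 0) := t1))) a 0 \<noteq> 0"
    by (rule alg_indep_Q_insert_row_comb_nonzero[where lam = lam, OF G ab lam I(1,2) x1])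
  obtain t2 where x3: "alg_indep_Q (x1((b, 0) := t1, (a, d - 1) := t2)) (insert (a, d - 1) (insert (b, 0) I))"
    and pairing: "(\<Sum>v\<in>V. (x1((b, 0) := t1, (a, d - 1) := t2)) (v, d - 1) *
        row_comb E lam (curry (x1((b, 0) := t1, (a, d - 1) := t2))) v 0) \<noteq> 0"
    by (rule alg_indep_Q_insert_pairing_nonzero[OF V(1,2) _ _ I(3) x2 load]) (use d I(1) in auto)
  define p where "p = curry (x1((b, 0) := t1, (a, d - 1) := t2))"
  have "insert (a, d - 1) (insert (b, 0) I) = V \<times> {..<d}"
    using d V by (auto simp: I_def J_def)
  then have "generic V d p"
    using x3 unfolding generic_def p_def case_prod_curry by simp
  moreover have "p v j = of_real (p0 v (j - 1))" if "0 < j" "j < d - 1" for v j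
    using mid that by (simp add: p_def)
  moreover have "(\<Sum>v\<in>V. p v (d - 1) * row_comb E lam p v 0) \<noteq> 0"
    using pairing by (simp add: p_def)
  ultimately show ?thesis by blast
qed

theorem lemma3p9:
  fixes V :: "'v set" and E :: "'v set set" and d :: nat
  assumes "d \<ge> 3"
    and "graph V E"
    and "\<not> M_independent V E (d - 2)"
  shows "\<exists>p :: 'v \<Rightarrow> nat \<Rightarrow> complex. generic V d p \<and>
           rot V d p \<in> inf_motions V E d p \<and>
           rot V d p \<notin> W V E d p \<and>
           W V E d p \<subset> inf_motions V E d p"
proof -
  have d: "2 \<le> d" using assms(1) by simp
  obtain p0 :: "'v \<Rightarrow> nat \<Rightarrow> real" and lam e where gen: "generic V (d - 2) p0"
    and stress: "\<forall>v\<in>V. \<forall>j<d - 2. row_comb E lam p0 v j = 0" and e: "e \<in> E" "lam e \<noteq> 0"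
    using assms(3) unfolding M_independent_def rows_independent_def row_comb_def by blast
  obtain a b where ab: "e = {a, b}" "a \<noteq> b"
    using assms(2) e(1) unfolding graph_def by blast
  define lam' where "lam' = (\<lambda>e. complex_of_real (lam e))"
  obtain p where gen_p: "generic V d p"
    and mid: "\<forall>v j. 0 < j \<longrightarrow> j < d - 1 \<longrightarrow> p v j = of_real (p0 v (j - 1))"
    and pairing: "(\<Sum>v\<in>V. p v (d - 1) * row_comb E lam' p v 0) \<noteq> 0"
    using exists_generic_lift_pairing_nonzero[OF assms(2) d gen, of a b lam'] e ab
    by (auto simp: lam'_def)
  have "row_comb E lam' p v j = 0" if "v \<in> V" "0 < j" "j < d - 1" for v j
    using row_comb_of_real[of p j p0 "j - 1" E lam v] mid stress that
    by (simp add: lam'_def)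
  then have "rot V d p \<notin> W V E d p"
    using rot_notin_W[OF d _ pairing] by blast
  moreover have "rot V d p \<in> inf_motions V E d p"
    by (rule rot_in_inf_motions[OF assms(2) d])
  ultimately show ?thesis
    using gen_p W_subset_inf_motions by blast
qed

end
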